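(* Let $P=C_1\cup C_2$ be a finite poset which is the disjoint union of two nonempty chains $C_1,C_2$ such that no element of $C_1$ is comparable with any element of $C_2$. Then for every $\mathbf a\in\mathrm{Orp}(P)$, $$\mathbf a!=\#\mathcal A(\mathbf a).$$ Moreover, if every block of $\mathbf a$ is contained in $C_1$ or in $C_2$ (i.e. $\mathbf a=(\mathbf a\cap C_1)\cup(\mathbf a\cap C_2)$), then $\mathfrak d(\mathbf a)=0$.
   Context: For a finite poset $P$, a partition of $P$ is a set of nonempty, pairwise disjoint subsets (blocks) whose union is $P$; $\mathcal P(P)$ is the set of partitions, ordered by refinement: $\mathbf a\le\mathbf b$ iff every block of $\mathbf a$ is contained in some block of $\mathbf b$. $|\mathbf a|$ denotes the number of blocks. A map $f:P\to\mathbb N$ is order-preserving if $x\le y$ implies $f(x)\le f(y)$; $\ker f$ denotes the set of nonempty fibres $f^{-1}(u)$. The set of ordered partitions is $\mathrm{Orp}(P)=\{\ker f: f:P\to\mathbb N \text{ order-preserving}\}\subseteq\mathcal P(P)$, with the induced order. For $\mathbf a\in\mathrm{Orp}(P)$, its factorial is $\mathbf a!=\#\{f:P\to\{1,\dots,|\mathbf a|\}\ \text{order-preserving}:\ \ker f=\mathbf a\}$. For $C\subseteq P$, $\mathbf a\cap C=\{B\cap C:B\in\mathbf a\}\setminus\{\emptyset\}$. A chain is a totally ordered subset. The antichain ancestry of $\mathbf a\in\mathrm{Orp}(P)$ is $\mathcal A(\mathbf a)=\{\mathbf b\in\mathrm{Orp}(P):\mathbf b\ge\mathbf a,\ \mathbf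 b\cap C=\mathbf a\cap C\text{ for every chain }C\subseteq P\}$, and $\mathfrak d(\mathbf a)=\sum_{\mathbf b\in\mathcal A(\mathbf a)}(-1)^{|\mathbf b|-1}\frac{\mathbf b!}{|\mathbf b|}$. *)

theory Defs
  imports "HOL-Library.FuncSet" Complex_Main
begin

definition poset_on :: "'a set \<Rightarrow> ('a \<Rightarrow> 'a \<Rightarrow> bool) \<Rightarrow> bool" where
  "poset_on P le \<longleftrightarrow>
     (\<forall>x\<in>P. le x x) \<and>
     (\<forall>x\<in>P. \<forall>y\<in>P. le x y \<and> le y x \<longrightarrow> x = y) \<and>
     (\<forall>x\<in>P. \<forall>y\<in>P. \<forall>z\<in>P. le x y \<and> le y z \<longrightarrow> le x z)"

definition is_chain :: "'a set \<Rightarrow> ('a \<Rightarrow> 'a \<Rightarrow> bool) \<Rightarrow> 'a set \<Rightarrow> bool" where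
  "is_chain P le C \<longleftrightarrow> C \<subseteq> P \<and> (\<forall>x\<in>C. \<forall>y\<in>C. le x y \<or> le y x)"

definition order_pres :: "'a set \<Rightarrow> ('a \<Rightarrow> 'a \<Rightarrow> bool) \<Rightarrow> ('a \<Rightarrow> nat) \<Rightarrow> bool" where
  "order_pres P le f \<longleftrightarrow> (\<forall>x\<in>P. \<forall>y\<in>P. le x y \<longrightarrow> f x \<le> f y)"

definition kern :: "'a set \<Rightarrow> ('a \<Rightarrow> nat) \<Rightarrow> 'a set set" where
  "kern P f = {{x\<in>P. f x = u} | u. {x\<in>P. f x = u} \<noteq> {}}"

definition Orp :: "'a set \<Rightarrow> ('a \<Rightarrow> 'a \<Rightarrow> bool) \<Rightarrow> 'a set set set" where
  "Orp P le = {kern P f | f. order_pres P le f}"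

definition refines :: "'a set set \<Rightarrow> 'a set set \<Rightarrow> bool" where
  "refines a b \<longleftrightarrow> (\<forall>B\<in>a. \<exists>B'\<in>b. B \<subseteq> B')"

definition opfact :: "'a set \<Rightarrow> ('a \<Rightarrow> 'a \<Rightarrow> bool) \<Rightarrow> 'a set set \<Rightarrow> nat" where
  "opfact P le a = card {f \<in> P \<rightarrow>\<^sub>E {1..card a}. order_pres P le f \<and> kern P f = a}"

definition part_restr :: "'a set set \<Rightarrow> 'a set \<Rightarrow> 'a set set" where
  "part_restr a C = {B \<inter> C | B. B \<in> a} - {{}}"

definition anc :: "'a set \<Rightarrow> ('a \<Rightarrow> 'a \<Rightarrow> bool) \<Rightarrow> 'a set set \<Rightarrow> 'a set set set" where
  "anc P le a = {b \<in> Orp P le. refines a b \<and>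
      (\<forall>C. is_chain P le C \<longrightarrow> part_restr b C = part_restr a C)}"

definition dfrak :: "'a set \<Rightarrow> ('a \<Rightarrow> 'a \<Rightarrow> bool) \<Rightarrow> 'a set set \<Rightarrow> real" where
  "dfrak P le a = (\<Sum>b\<in>anc P le a. (-1) ^ (card b - 1) * real (opfact P le b) / real (card b))"

end

theory Submission
  imports Defs
begin

text \<open>
  Both claims are proved by induction on the size of the poset, peeling off up-closed blocks.
  Deleting the largest label shows that a! is the sum of (a - T)! over the up-closed blocks T of a.
  These are the blocks containing the top elements of the two chains, so there are at most two,
  X and Y. An ancestor agrees with a on each chain, hence each of its blocks is a block of a or the
  union of a block inside C1 and a block inside C2, and its top block is X, Y or X \<union> Y. Sorting the
  ancestors by their top block gives, by inclusion-exclusion, the same recursion for their number.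

  For the second claim, b! = #anc(b) for the ancestors b of a turns dfrak(a) into minus the sum of
  (-1)^|b| / |b| over pairs b \<le> c of ancestors. With the denominators shifted to |b| + t, removing
  the top blocks of a partition whose blocks lie in the chains gives a three-term recursion in the
  numbers p, q of blocks in the two chains, solved for t = s + 1 by
  (-1)^(p+q) (s+p)! (s+q)! / (s! (s+p+q+1)!); for t = 0 the three terms cancel.
\<close>

section \<open>Partitions and ordered partitions\<close>

definition is_partition :: "'a set \<Rightarrow> 'a set set \<Rightarrow> bool" where
  "is_partition P a \<longleftrightarrow> (\<forall>B\<in>a. B \<noteq> {} \<and> B \<subseteq> P) \<and> (\<forall>B\<in>a. \<forall>B'\<in>a. B \<inter> B' \<noteq> {} \<longrightarrow> B = B')
     \<and> (\<forall>x\<in>P. \<exists>B\<in>a. x \<in> B)"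

definition up_closed :: "'a set \<Rightarrow> ('a \<Rightarrow> 'a \<Rightarrow> bool) \<Rightarrow> 'a set \<Rightarrow> bool" where
  "up_closed P le T \<longleftrightarrow> (\<forall>x\<in>T. \<forall>y\<in>P. le x y \<longrightarrow> y \<in> T)"

lemma partition_block_nonempty: "is_partition P a \<Longrightarrow> B \<in> a \<Longrightarrow> B \<noteq> {}"
  unfolding is_partition_def by blast

lemma partition_block_subset: "is_partition P a \<Longrightarrow> B \<in> a \<Longrightarrow> B \<subseteq> P"
  unfolding is_partition_def by blast

lemma partition_block_unique:
  "is_partition P a \<Longrightarrow> B \<in> a \<Longrightarrow> B' \<in> a \<Longrightarrow> x \<in> B \<Longrightarrow> x \<in> B' \<Longrightarrow> B = B'"
  unfolding is_partition_def by blast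

lemma partition_covers: "is_partition P a \<Longrightarrow> x \<in> P \<Longrightarrow> \<exists>B\<in>a. x \<in> B"
  unfolding is_partition_def by blast

lemma partition_block_disjoint_Union:
  "is_partition P a \<Longrightarrow> A \<subseteq> a \<Longrightarrow> B \<in> a - A \<Longrightarrow> B \<inter> \<Union>A = {}"
  unfolding is_partition_def by blast

lemma finite_partition: "finite P \<Longrightarrow> is_partition P a \<Longrightarrow> finite a"
  unfolding is_partition_def by (meson Pow_iff finite_Pow_iff rev_finite_subset subsetI)

lemma mem_kern_iff: "B \<in> kern P f \<longleftrightarrow> (\<exists>x\<in>P. B = {y\<in>P. f y = f x})"
  unfolding kern_def by blast

lemma is_partition_kern: "is_partition P (kern P f)"
proof -
  have "\<forall>B\<in>kern P f. B \<noteq> {} \<and> B \<subseteq> P"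
    by (auto simp: mem_kern_iff)
  moreover have "\<forall>B\<in>kern P f. \<forall>B'\<in>kern P f. B \<inter> B' \<noteq> {} \<longrightarrow> B = B'"
    by (auto simp: mem_kern_iff)
  moreover have "\<forall>x\<in>P. \<exists>B\<in>kern P f. x \<in> B"
    unfolding Bex_def mem_kern_iff by blast
  ultimately show ?thesis unfolding is_partition_def by blast
qed

lemma kern_cong: "(\<And>x. x \<in> P \<Longrightarrow> f x = g x) \<Longrightarrow> kern P f = kern P g"
proof -
  assume "\<And>x. x \<in> P \<Longrightarrow> f x = g x"
  then have "{x\<in>P. f x = u} = {x\<in>P. g x = u}" for u by auto
  then show ?thesis unfolding kern_def by simp
qed

lemma card_kern: "card (kern P f) = card (f ` P)"
proof -
  have "bij_betw (\<lambda>u. {x\<in>P. f x = u}) (f ` P) (kern P f)"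
    by (rule bij_betwI') (auto simp: mem_kern_iff)
  then show ?thesis by (simp add: bij_betw_same_card)
qed

lemma kern_Diff_Union:
  assumes "A \<subseteq> kern P f"
  shows "kern (P - \<Union>A) f = kern P f - A"
proof -
  have disj: "B \<inter> \<Union>A = {}" if "B \<in> kern P f - A" for B
    using partition_block_disjoint_Union[OF is_partition_kern assms that] .
  show ?thesis
  proof (rule set_eqI, rule iffI)
    fix B assume "B \<in> kern (P - \<Union>A) f"
    then obtain x where x: "x \<in> P - \<Union>A" and B: "B = {y\<in>P - \<Union>A. f y = f x}"
      unfolding mem_kern_iff by blast
    define F where "F = {y\<in>P. f y = f x}"
    have F: "F \<in> kern P f" "x \<in> F" using x unfolding F_def mem_kern_iff by blast+
    then have "F \<notin> A" using x by blast
    then have "B = F" using disj F unfolding B F_def by blast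
    then show "B \<in> kern P f - A" using F \<open>F \<notin> A\<close> by blast
  next
    fix B assume B: "B \<in> kern P f - A"
    then obtain x where x: "x \<in> P" and B_eq: "B = {y\<in>P. f y = f x}"
      using mem_kern_iff[of B P f] by blast
    have "x \<in> P - \<Union>A" using disj[OF B] x B_eq by blast
    moreover have "B = {y\<in>P - \<Union>A. f y = f x}" using disj[OF B] B_eq by blast
    ultimately show "B \<in> kern (P - \<Union>A) f" unfolding mem_kern_iff by blast
  qed
qed

lemma kern_override_on_block:
  assumes "T \<subseteq> P" "T \<noteq> {}" "\<forall>x\<in>P - T. g x \<noteq> c"
  shows "kern P (\<lambda>x. if x \<in> T then c else g x) = insert T (kern (P - T) g)"
proof (rule set_eqI, rule iffI)
  fix B assume "B \<in> kern P (\<lambda>x. if x \<in> T then c else g x)"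
  then obtain x where x: "x \<in> P"
    and B: "B = {y\<in>P. (if y \<in> T then c else g y) = (if x \<in> T then c else g x)}"
    by (auto simp: mem_kern_iff)
  show "B \<in> insert T (kern (P - T) g)"
  proof (cases "x \<in> T")
    case True
    then show ?thesis using B assms by auto
  next
    case False
    then have "B = {y\<in>P - T. g y = g x}" using B assms x by auto
    then have "B \<in> kern (P - T) g" using x False unfolding mem_kern_iff by blast
    then show ?thesis by blast
  qed
next
  fix B assume "B \<in> insert T (kern (P - T) g)"
  then consider "B = T" | x where "x \<in> P - T" "B = {y\<in>P - T. g y = g x}"
    by (auto simp: mem_kern_iff)
  then show "B \<in> kern P (\<lambda>x. if x \<in> T then c else g x)"
  proof cases
    case 1
    obtain x where "x \<in> T" using assms by blast
    then have "T = {y\<in>P. (if y \<in> T then c else g y) = (if x \<in> T then c else g x)}"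
      using assms by auto
    then show ?thesis using 1 \<open>x \<in> T\<close> assms unfolding mem_kern_iff by blast
  next
    case 2
    then have "B = {y\<in>P. (if y \<in> T then c else g y) = (if x \<in> T then c else g x)}"
      using assms by auto
    then show ?thesis using 2 unfolding mem_kern_iff by blast
  qed
qed

lemma is_partition_Orp: "a \<in> Orp P le \<Longrightarrow> is_partition P a"
  unfolding Orp_def using is_partition_kern by blast

lemma order_pres_subset: "order_pres P le f \<Longrightarrow> Q \<subseteq> P \<Longrightarrow> order_pres Q le f"
  unfolding order_pres_def by blast

lemma Orp_Diff_Union:
  assumes "a \<in> Orp P le" "A \<subseteq> a"
  shows "a - A \<in> Orp (P - \<Union>A) le"
proof -
  obtain f where f: "order_pres P le f" "a = kern P f" using assms(1) unfolding Orp_def by blast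
  then have "a - A = kern (P - \<Union>A) f" using kern_Diff_Union[of A P f] assms(2) by simp
  moreover have "order_pres (P - \<Union>A) le f" using order_pres_subset f(1) by blast
  ultimately show ?thesis unfolding Orp_def by blast
qed

lemma Orp_Diff_block: "a \<in> Orp P le \<Longrightarrow> T \<in> a \<Longrightarrow> a - {T} \<in> Orp (P - T) le"
  using Orp_Diff_Union[of a P le "{T}"] by simp

lemma Orp_insert_up_closed:
  assumes "finite P" "b \<in> Orp (P - T) le" "T \<subseteq> P" "T \<noteq> {}" "up_closed P le T"
  shows "insert T b \<in> Orp P le"
proof -
  obtain g where g: "order_pres (P - T) le g" "b = kern (P - T) g"
    using assms(2) unfolding Orp_def by blast
  define c where "c = Suc (Max (insert 0 (g ` (P - T))))"
  have g_less: "g x < c" if "x \<in> P - T" for x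
    unfolding c_def using assms(1) that by (simp add: le_imp_less_Suc)
  define f where "f = (\<lambda>x. if x \<in> T then c else g x)"
  have "kern P f = insert T b"
    unfolding f_def g(2) by (rule kern_override_on_block) (use assms g_less in auto)
  moreover have "order_pres P le f"
    unfolding order_pres_def f_def
  proof (intro ballI impI)
    fix x y assume xy: "x \<in> P" "y \<in> P" "le x y"
    show "(if x \<in> T then c else g x) \<le> (if y \<in> T then c else g y)"
    proof (cases "x \<in> T")
      case True
      then have "y \<in> T" using assms(5) xy unfolding up_closed_def by blast
      then show ?thesis using True by simp
    next
      case False
      then show ?thesis using g_less[of x] xy g(1) unfolding order_pres_def
        by (cases "y \<in> T") auto
    qed
  qed
  ultimately show ?thesis unfolding Orp_def by blast
qed

lemma Orp_block_convex:
  assumes "a \<in> Orp P le" "Z \<in> a" "x \<in> Z" "z \<in> Z" "y \<in> P" "le x y" "le y z"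
  shows "y \<in> Z"
proof -
  obtain f where f: "order_pres P le f" "a = kern P f" using assms(1) unfolding Orp_def by blast
  have "Z \<in> kern P f" using assms(2) f(2) by simp
  then obtain w where w: "w \<in> P" "Z = {u\<in>P. f u = f w}" unfolding mem_kern_iff by blast
  then have "f x = f w" "f z = f w" "x \<in> P" "z \<in> P" using assms(3,4) by simp_all
  moreover have "f x \<le> f y" "f y \<le> f z" using f(1) assms(5-7) calculation unfolding order_pres_def by blast+
  ultimately show ?thesis using w assms(5) by simp
qed

lemma Orp_has_up_closed_block:
  assumes "finite P" "P \<noteq> {}" "b \<in> Orp P le"
  obtains T where "T \<in> b" "up_closed P le T"
proof -
  obtain f where f: "order_pres P le f" "b = kern P f" using assms(3) unfolding Orp_def by blast
  define M where "M = Max (f ` P)"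
  have "M \<in> f ` P" unfolding M_def using assms(1,2) by simp
  then obtain x where x: "x \<in> P" "f x = M" by blast
  define T where "T = {y\<in>P. f y = M}"
  have "T \<in> b" unfolding f(2) mem_kern_iff T_def using x by blast
  moreover have "up_closed P le T"
    unfolding up_closed_def
  proof (intro ballI impI)
    fix y z assume "y \<in> T" "z \<in> P" "le y z"
    then have "M \<le> f z" using f(1) unfolding order_pres_def T_def by force
    moreover have "f z \<le> M" unfolding M_def using assms(1) \<open>z \<in> P\<close> by simp
    ultimately show "z \<in> T" unfolding T_def using \<open>z \<in> P\<close> by simp
  qed
  ultimately show ?thesis using that by blast
qed

lemma part_restr_Un: "part_restr (a \<union> a') C = part_restr a C \<union> part_restr a' C"
  unfolding part_restr_def by blast

lemma part_restr_insert: "part_restr (insert T a) C =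
   (if T \<inter> C = {} then part_restr a C else insert (T \<inter> C) (part_restr a C))"
  unfolding part_restr_def by auto

lemma part_restr_Int_subset: "(\<forall>B\<in>a. B \<subseteq> Q) \<Longrightarrow> part_restr a C = part_restr a (C \<inter> Q)"
proof -
  assume sub: "\<forall>B\<in>a. B \<subseteq> Q"
  have "B \<inter> C = B \<inter> (C \<inter> Q)" if "B \<in> a" for B using sub that by auto
  then have "(\<lambda>B. B \<inter> C) ` a = (\<lambda>B. B \<inter> (C \<inter> Q)) ` a" by (rule image_cong[OF refl])
  then show ?thesis unfolding part_restr_def Setcompr_eq_image by simp
qed

lemma part_restr_Diff_disjoint: "(\<forall>B\<in>A. B \<inter> C = {}) \<Longrightarrow> part_restr (a - A) C = part_restr a C"
  unfolding part_restr_def by auto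

lemma part_restr_partition:
  assumes "is_partition P a"
  shows "part_restr a P = a"
proof -
  have "(\<lambda>B. B \<inter> P) ` a = a"
    using partition_block_subset[OF assms] by (force simp: Int_absorb2)
  moreover have "{} \<notin> a" using partition_block_nonempty[OF assms] by blast
  ultimately show ?thesis unfolding part_restr_def Setcompr_eq_image by simp
qed

lemma is_chain_Diff: "is_chain P le C \<Longrightarrow> is_chain (P - T) le (C - T)"
  unfolding is_chain_def by blast

lemma is_chain_mono: "is_chain (P - T) le C \<Longrightarrow> is_chain P le C"
  unfolding is_chain_def by blast

lemma refines_refl: "refines a a"
  unfolding refines_def by blast

lemma refines_trans: "refines a b \<Longrightarrow> refines b c \<Longrightarrow> refines a c"
  unfolding refines_def by (meson order_trans)

lemma anc_Orp: "b \<in> anc P le a \<Longrightarrow> b \<in> Orp P le"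
  unfolding anc_def by blast

lemma is_partition_anc: "b \<in> anc P le a \<Longrightarrow> is_partition P b"
  by (rule is_partition_Orp[OF anc_Orp])

lemma anc_self: "a \<in> Orp P le \<Longrightarrow> a \<in> anc P le a"
  unfolding anc_def using refines_refl by blast

lemma finite_anc: "finite P \<Longrightarrow> finite (anc P le a)"
proof -
  assume "finite P"
  moreover have "anc P le a \<subseteq> Pow (Pow P)"
    using is_partition_anc partition_block_subset by blast
  ultimately show ?thesis by (meson finite_Pow_iff finite_subset)
qed

lemma anc_anc: "b \<in> anc P le a \<Longrightarrow> anc P le b = {c \<in> anc P le a. refines b c}"
  unfolding anc_def using refines_trans by auto

lemma anc_chain:
  assumes "a \<in> Orp P le" "is_chain P le P"
  shows "anc P le a = {a}"
proof -
  have "b = a" if b: "b \<in> anc P le a" for b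
  proof -
    have "part_restr b P = part_restr a P" using b assms(2) unfolding anc_def by blast
    then show ?thesis
      using part_restr_partition is_partition_anc[OF b] is_partition_Orp[OF assms(1)] by metis
  qed
  then show ?thesis using anc_self[OF assms(1)] by blast
qed

lemma anc_block_superset:
  assumes "b \<in> anc P le a" "Z \<in> a" "B \<in> b" "x \<in> Z" "x \<in> B"
  shows "Z \<subseteq> B"
proof -
  obtain B' where "B' \<in> b" "Z \<subseteq> B'" using assms(1,2) unfolding anc_def refines_def by blast
  moreover have "B' = B"
    using partition_block_unique[OF is_partition_anc[OF assms(1)]] calculation assms(3-5) by blast
  ultimately show ?thesis by simp
qed

lemma anc_block_trace:
  assumes "a \<in> Orp P le" "b \<in> anc P le a" "B \<in> b" "Z \<in> a" "x \<in> B" "x \<in> Z" "x \<in> C"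
    and "is_chain P le C"
  shows "B \<inter> C = Z \<inter> C"
proof -
  have "B \<inter> C \<in> part_restr b C" unfolding part_restr_def using assms(3,5,7) by blast
  also have "part_restr b C = part_restr a C" using assms(2,8) unfolding anc_def by blast
  finally obtain Z' where Z': "Z' \<in> a" "B \<inter> C = Z' \<inter> C" unfolding part_restr_def by blast
  then have "Z' = Z"
    using partition_block_unique[OF is_partition_Orp[OF assms(1)] Z'(1) assms(4)] assms(5-7) by blast
  then show ?thesis using Z' by simp
qed

lemma anc_block_chain_trace:
  assumes a: "a \<in> Orp P le" and b: "b \<in> anc P le a" and B: "B \<in> b"
    and C: "is_chain P le C" "B \<inter> C \<noteq> {}"
  shows "\<exists>Z\<in>a. B \<inter> C = Z \<inter> C \<and> Z \<subseteq> B"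
proof -
  obtain x where x: "x \<in> B" "x \<in> C" using C(2) by blast
  moreover have "B \<subseteq> P" using partition_block_subset[OF is_partition_anc[OF b] B] .
  ultimately obtain Z where Z: "Z \<in> a" "x \<in> Z" using partition_covers[OF is_partition_Orp[OF a]] by blast
  have "B \<inter> C = Z \<inter> C" using anc_block_trace[OF a b B Z(1) x(1) Z(2) x(2) C(1)] .
  moreover have "Z \<subseteq> B" using anc_block_superset[OF b Z(1) B Z(2) x(1)] .
  ultimately show ?thesis using Z(1) by blast
qed

section \<open>Removing an up-closed top block\<close>

definition no_chain_meets_two :: "'a set \<Rightarrow> ('a \<Rightarrow> 'a \<Rightarrow> bool) \<Rightarrow> 'a set set \<Rightarrow> bool" where
  "no_chain_meets_two P le A \<longleftrightarrow>
     (\<forall>C. is_chain P le C \<longrightarrow> (\<forall>Z\<in>A. \<forall>Z'\<in>A. Z \<inter> C \<noteq> {} \<longrightarrow> Z' \<inter> C \<noteq> {} \<longrightarrow> Z = Z'))"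

lemma no_chain_meets_two_singleton: "no_chain_meets_two P le {X}"
  unfolding no_chain_meets_two_def by blast

lemma anc_Diff_block:
  assumes "a \<in> Orp P le" "A \<subseteq> a" "T = \<Union>A" "b \<in> anc P le a" "T \<in> b"
  shows "b - {T} \<in> anc (P - T) le (a - A)"
proof -
  have pa: "is_partition P a" using assms(1) by (rule is_partition_Orp)
  have "b - {T} \<in> Orp (P - T) le" using Orp_Diff_block[OF anc_Orp] assms(4,5) .
  moreover have "refines (a - A) (b - {T})"
    unfolding refines_def
  proof
    fix B assume B: "B \<in> a - A"
    then obtain B' where B': "B' \<in> b" "B \<subseteq> B'" using assms(4) unfolding anc_def refines_def by blast
    have "B \<inter> T = {}" using partition_block_disjoint_Union[OF pa assms(2) B] assms(3) by simp
    then have "B' \<noteq> T" using B' partition_block_nonempty[OF pa] B by blast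
    then show "\<exists>B'\<in>b - {T}. B \<subseteq> B'" using B' by blast
  qed
  moreover have "part_restr (b - {T}) C = part_restr (a - A) C" if "is_chain (P - T) le C" for C
  proof -
    have "C \<inter> T = {}" using that unfolding is_chain_def by blast
    then have "part_restr (b - {T}) C = part_restr b C" "part_restr (a - A) C = part_restr a C"
      using assms(3) by (auto intro!: part_restr_Diff_disjoint)
    moreover have "part_restr b C = part_restr a C"
      using assms(4) is_chain_mono[OF that] unfolding anc_def by blast
    ultimately show ?thesis by simp
  qed
  ultimately show ?thesis unfolding anc_def by blast
qed

lemma part_restr_merged_blocks:
  assumes "no_chain_meets_two P le A" "is_chain P le C" "T = \<Union>A"
  shows "part_restr A C = part_restr {T} C"
proof (cases "T \<inter> C = {}")
  case True
  then show ?thesis using assms(3) unfolding part_restr_def by auto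
next
  case False
  then obtain Z where Z: "Z \<in> A" "Z \<inter> C \<noteq> {}" using assms(3) by blast
  have other: "Z' \<inter> C = {}" if "Z' \<in> A" "Z' \<noteq> Z" for Z'
    using assms(1,2) Z that unfolding no_chain_meets_two_def by blast
  then have "T \<inter> C = Z \<inter> C" using Z(1) assms(3) by blast
  moreover have "part_restr A C = {Z \<inter> C}"
    using Z other unfolding part_restr_def by blast
  ultimately show ?thesis using Z(2) unfolding part_restr_def by auto
qed

lemma anc_insert_block:
  assumes "finite P" "a \<in> Orp P le" "A \<subseteq> a" "A \<noteq> {}" "T = \<Union>A" "up_closed P le T"
    and "no_chain_meets_two P le A"
    and "b \<in> anc (P - T) le (a - A)"
  shows "insert T b \<in> anc P le a" "T \<notin> b"
proof -
  have pa: "is_partition P a" using assms(2) by (rule is_partition_Orp)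
  have pb: "is_partition (P - T) b" using assms(8) by (rule is_partition_anc)
  have TP: "T \<subseteq> P" using partition_block_subset[OF pa] assms(3,5) by blast
  have "T \<noteq> {}" using partition_block_nonempty[OF pa] assms(3-5) by blast
  then show "T \<notin> b" using partition_block_subset[OF pb] by blast
  have "insert T b \<in> Orp P le"
    using Orp_insert_up_closed[OF assms(1) anc_Orp[OF assms(8)] TP \<open>T \<noteq> {}\<close> assms(6)] .
  moreover have "refines a (insert T b)"
    using assms(5,8) unfolding anc_def refines_def by blast
  moreover have "part_restr (insert T b) C = part_restr a C" if C: "is_chain P le C" for C
  proof -
    have rest: "\<forall>B\<in>a - A. B \<subseteq> P - T"
      using partition_block_disjoint_Union[OF pa assms(3)] partition_block_subset[OF pa] assms(5) by blast
    have CT: "C \<inter> (P - T) = C - T" using C unfolding is_chain_def by blast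
    have "part_restr b C = part_restr b (C - T)"
      using part_restr_Int_subset[of b "P - T" C] partition_block_subset[OF pb] CT by simp
    also have "\<dots> = part_restr (a - A) (C - T)"
      using assms(8) is_chain_Diff[OF C] unfolding anc_def by blast
    also have "\<dots> = part_restr (a - A) C"
      using part_restr_Int_subset[OF rest, of C] CT by simp
    finally have "part_restr b C = part_restr (a - A) C" .
    moreover have "a = (a - A) \<union> A" using assms(3) by blast
    ultimately show ?thesis
      using part_restr_Un[of "a - A" A C] part_restr_merged_blocks[OF assms(7) C assms(5)]
        part_restr_insert[of T b C] part_restr_insert[of T "{}" C]
      by (auto simp: part_restr_def)
  qed
  ultimately show "insert T b \<in> anc P le a" unfolding anc_def by blast
qed

lemma bij_betw_anc_Diff_block:
  assumes "finite P" "a \<in> Orp P le" "A \<subseteq> a" "A \<noteq> {}" "T = \<Union>A" "up_closed P le T"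
    and "no_chain_meets_two P le A"
  shows "bij_betw (\<lambda>b. b - {T}) {b \<in> anc P le a. T \<in> b \<and> Q (b - {T})}
           {b' \<in> anc (P - T) le (a - A). Q b'}"
  by (rule bij_betw_byWitness[where f'="insert T"])
     (use anc_insert_block[OF assms] anc_Diff_block[OF assms(2,3,5)] in \<open>auto simp: insert_absorb\<close>)

lemma sum_anc_Diff_block:
  assumes "finite P" "a \<in> Orp P le" "A \<subseteq> a" "A \<noteq> {}" "T = \<Union>A" "up_closed P le T"
    and "no_chain_meets_two P le A"
  shows "(\<Sum>b\<in>{b \<in> anc P le a. T \<in> b \<and> Q (b - {T})}. (\<phi> b :: 'b::comm_monoid_add))
       = (\<Sum>b'\<in>{b' \<in> anc (P - T) le (a - A). Q b'}. \<phi> (insert T b'))"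
proof -
  have "(\<Sum>b\<in>{b \<in> anc P le a. T \<in> b \<and> Q (b - {T})}. \<phi> b)
      = (\<Sum>b\<in>{b \<in> anc P le a. T \<in> b \<and> Q (b - {T})}. \<phi> (insert T (b - {T})))"
    by (rule sum.cong) (auto simp: insert_absorb)
  also have "\<dots> = (\<Sum>b'\<in>{b' \<in> anc (P - T) le (a - A). Q b'}. \<phi> (insert T b'))"
    by (rule sum.reindex_bij_betw[OF bij_betw_anc_Diff_block[OF assms]])
  finally show ?thesis .
qed

section \<open>The factorial\<close>

definition ordered_labelings :: "'a set \<Rightarrow> ('a \<Rightarrow> 'a \<Rightarrow> bool) \<Rightarrow> 'a set set \<Rightarrow> ('a \<Rightarrow> nat) set" where
  "ordered_labelings P le a = {f \<in> P \<rightarrow>\<^sub>E {1..card a}. order_pres P le f \<and> kern P f = a}"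

lemma opfact_eq_card_labelings: "opfact P le a = card (ordered_labelings P le a)"
  unfolding opfact_def ordered_labelings_def ..

lemma finite_ordered_labelings: "finite P \<Longrightarrow> finite (ordered_labelings P le a)"
  unfolding ordered_labelings_def
  by (rule finite_subset[of _ "P \<rightarrow>\<^sub>E {1..card a}"]) (auto intro: finite_PiE)

lemma ordered_labeling_top_fibre:
  assumes "finite P" "P \<noteq> {}" "f \<in> ordered_labelings P le a"
  shows "{x\<in>P. f x = card a} \<in> a" "up_closed P le {x\<in>P. f x = card a}"
proof -
  have f: "f ` P \<subseteq> {1..card a}" "kern P f = a" "order_pres P le f"
    using assms(3) unfolding ordered_labelings_def by auto
  have "card (f ` P) = card a" using card_kern[of P f] f(2) by simp
  then have "f ` P = {1..card a}" using f(1) by (intro card_subset_eq) auto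
  then have "card a \<in> f ` P" using assms(2) by (cases "card a") auto
  then show "{x\<in>P. f x = card a} \<in> a" unfolding f(2)[symmetric] mem_kern_iff by force
  show "up_closed P le {x\<in>P. f x = card a}"
    unfolding up_closed_def
  proof (intro ballI impI)
    fix y z assume "y \<in> {x\<in>P. f x = card a}" "z \<in> P" "le y z"
    moreover have "f z \<le> card a" using f(1) \<open>z \<in> P\<close> by auto
    ultimately show "z \<in> {x\<in>P. f x = card a}" using f(3) unfolding order_pres_def by force
  qed
qed

lemma ordered_labeling_restrict:
  assumes "f \<in> ordered_labelings P le a" "T = {x\<in>P. f x = card a}" "T \<in> a"
  shows "restrict f (P - T) \<in> ordered_labelings (P - T) le (a - {T})"
proof -
  have f: "f \<in> P \<rightarrow>\<^sub>E {1..card a}" "order_pres P le f" "kern P f = a"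
    using assms(1) unfolding ordered_labelings_def by blast+
  have "card (a - {T}) = card a - 1" using assms(3) by simp
  then have "restrict f (P - T) \<in> (P - T) \<rightarrow>\<^sub>E {1..card (a - {T})}"
    using f(1) assms(2) by fastforce
  moreover have "order_pres (P - T) le (restrict f (P - T))"
    using f(2) unfolding order_pres_def by auto
  moreover have "kern (P - T) (restrict f (P - T)) = a - {T}"
    using kern_cong[of "P - T" "restrict f (P - T)" f] kern_Diff_Union[of "{T}" P f] f(3) assms(3)
    by simp
  ultimately show ?thesis unfolding ordered_labelings_def by blast
qed

lemma ordered_labeling_extend:
  assumes "finite P" "is_partition P a" "T \<in> a" "up_closed P le T"
    and "g \<in> ordered_labelings (P - T) le (a - {T})"
  shows "(\<lambda>x. if x \<in> T then card a else g x) \<in> ordered_labelings P le a"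
    "{x\<in>P. (if x \<in> T then card a else g x) = card a} = T"
proof -
  let ?f = "\<lambda>x. if x \<in> T then card a else g x"
  have g: "g \<in> (P - T) \<rightarrow>\<^sub>E {1..card a - 1}" "order_pres (P - T) le g" "kern (P - T) g = a - {T}"
    using assms(3,5) unfolding ordered_labelings_def by auto
  have TP: "T \<subseteq> P" "T \<noteq> {}"
    using partition_block_subset[OF assms(2,3)] partition_block_nonempty[OF assms(2,3)] by auto
  have "card a \<noteq> 0" using assms(3) finite_partition[OF assms(1,2)] by auto
  have g_less: "g x < card a" if "x \<in> P - T" for x
    using PiE_mem[OF g(1) that] \<open>card a \<noteq> 0\<close> by auto
  have g_ne: "g x \<noteq> card a" if "x \<in> P - T" for x using g_less[OF that] by simp
  then show "{x\<in>P. ?f x = card a} = T" using TP(1) by auto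
  have "?f \<in> P \<rightarrow>\<^sub>E {1..card a}"
  proof (rule PiE_I)
    show "?f x \<in> {1..card a}" if "x \<in> P" for x
      using \<open>card a \<noteq> 0\<close> g_less[of x] PiE_mem[OF g(1), of x] that by auto
    show "?f x = undefined" if "x \<notin> P" for x
      using that TP(1) PiE_arb[OF g(1), of x] by auto
  qed
  moreover have "order_pres P le ?f"
    unfolding order_pres_def
  proof (intro ballI impI)
    fix x y assume xy: "x \<in> P" "y \<in> P" "le x y"
    show "?f x \<le> ?f y"
    proof (cases "x \<in> T")
      case True
      then have "y \<in> T" using assms(4) xy unfolding up_closed_def by blast
      then show ?thesis using True by simp
    next
      case False
      then show ?thesis using xy g(2) g_less[of x] unfolding order_pres_def by auto
    qed
  qed
  moreover have "kern P ?f = insert T (kern (P - T) g)"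
    by (rule kern_override_on_block[OF TP]) (use g_ne in blast)
  then have "kern P ?f = a" using g(3) assms(3) by auto
  ultimately show "?f \<in> ordered_labelings P le a" unfolding ordered_labelings_def by blast
qed

lemma card_ordered_labelings_top_fibre:
  assumes "finite P" "a \<in> Orp P le" "T \<in> a" "up_closed P le T"
  shows "card {f \<in> ordered_labelings P le a. {x\<in>P. f x = card a} = T} = opfact (P - T) le (a - {T})"
proof -
  have pa: "is_partition P a" using assms(2) by (rule is_partition_Orp)
  have TP: "T \<subseteq> P" using partition_block_subset[OF pa assms(3)] .
  let ?G = "{f \<in> ordered_labelings P le a. {x\<in>P. f x = card a} = T}"
  let ?ext = "\<lambda>g x. if x \<in> T then card a else g x"
  have "bij_betw (\<lambda>f. restrict f (P - T)) ?G (ordered_labelings (P - T) le (a - {T}))"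
  proof (rule bij_betw_byWitness[where f'="?ext"])
    show "\<forall>f\<in>?G. ?ext (restrict f (P - T)) = f"
      unfolding ordered_labelings_def using TP by (force simp: PiE_def extensional_def)
    show "\<forall>g\<in>ordered_labelings (P - T) le (a - {T}). restrict (?ext g) (P - T) = g"
      unfolding ordered_labelings_def by (force simp: PiE_def extensional_def)
    show "(\<lambda>f. restrict f (P - T)) ` ?G \<subseteq> ordered_labelings (P - T) le (a - {T})"
      using ordered_labeling_restrict assms(3) by blast
    show "?ext ` ordered_labelings (P - T) le (a - {T}) \<subseteq> ?G"
      using ordered_labeling_extend[OF assms(1) pa assms(3,4)] by blast
  qed
  then show ?thesis unfolding opfact_eq_card_labelings by (rule bij_betw_same_card)
qed

text \<open>Sorting labelings by the fibre of the largest label.\<close>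

lemma opfact_recursion:
  assumes "finite P" "P \<noteq> {}" "a \<in> Orp P le"
  shows "opfact P le a = (\<Sum>T\<in>{T\<in>a. up_closed P le T}. opfact (P - T) le (a - {T}))"
proof -
  define U where "U = {T\<in>a. up_closed P le T}"
  define G where "G T = {f\<in>ordered_labelings P le a. {x\<in>P. f x = card a} = T}" for T
  have "ordered_labelings P le a = (\<Union>T\<in>U. G T)"
  proof (intro equalityI subsetI)
    fix f assume f: "f \<in> ordered_labelings P le a"
    then have "{x\<in>P. f x = card a} \<in> U"
      using ordered_labeling_top_fibre[OF assms(1,2) f] unfolding U_def by blast
    then show "f \<in> (\<Union>T\<in>U. G T)" using f unfolding G_def by blast
  qed (auto simp: G_def)
  moreover have "card (\<Union>T\<in>U. G T) = (\<Sum>T\<in>U. card (G T))"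
    by (rule card_UN_disjoint)
       (use finite_partition[OF assms(1) is_partition_Orp[OF assms(3)]]
         finite_ordered_labelings[OF assms(1)] in \<open>auto simp: U_def G_def\<close>)
  ultimately have "opfact P le a = (\<Sum>T\<in>U. card (G T))"
    unfolding opfact_eq_card_labelings[of P le a] by simp
  also have "\<dots> = (\<Sum>T\<in>U. opfact (P - T) le (a - {T}))"
    unfolding U_def G_def by (rule sum.cong) (auto simp: card_ordered_labelings_top_fibre[OF assms(1,3)])
  finally show ?thesis unfolding U_def .
qed

section \<open>Alternating sums over ancestries\<close>

definition anc_alt_sum_below :: "'a set \<Rightarrow> ('a \<Rightarrow> 'a \<Rightarrow> bool) \<Rightarrow> 'a set set \<Rightarrow> 'a set set \<Rightarrow> nat \<Rightarrow> real"
  where "anc_alt_sum_below P le a c t =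
    (\<Sum>b\<in>{b \<in> anc P le a. refines b c}. (-1) ^ card b / real (card b + t))"

definition anc_alt_sum :: "'a set \<Rightarrow> ('a \<Rightarrow> 'a \<Rightarrow> bool) \<Rightarrow> 'a set set \<Rightarrow> nat \<Rightarrow> real" where
  "anc_alt_sum P le a t = (\<Sum>c\<in>anc P le a. anc_alt_sum_below P le a c t)"

lemma anc_alt_sum_chain:
  assumes "a \<in> Orp P le" "is_chain P le P"
  shows "anc_alt_sum P le a t = (-1) ^ card a / real (card a + t)"
proof -
  have "anc P le a = {a}" using anc_chain[OF assms] .
  moreover have "{b \<in> {a}. refines b a} = {a}" using refines_refl by blast
  ultimately show ?thesis unfolding anc_alt_sum_def anc_alt_sum_below_def by simp
qed

lemma refines_insert_Union_iff:
  assumes "is_partition P b" "A \<subseteq> b"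
  shows "refines b (insert (\<Union>A) c) \<longleftrightarrow> refines (b - A) c"
proof
  assume r: "refines b (insert (\<Union>A) c)"
  show "refines (b - A) c"
    unfolding refines_def
  proof
    fix B assume B: "B \<in> b - A"
    then obtain D where D: "D \<in> insert (\<Union>A) c" "B \<subseteq> D" using r unfolding refines_def by blast
    have "B \<inter> \<Union>A = {}" using partition_block_disjoint_Union[OF assms B] .
    then have "D \<noteq> \<Union>A" using D(2) partition_block_nonempty[OF assms(1)] B by blast
    then show "\<exists>B'\<in>c. B \<subseteq> B'" using D by blast
  qed
qed (auto simp: refines_def)

lemma anc_refines_insert_block_iff:
  assumes "a \<in> Orp P le" "X \<in> a" "c \<in> anc (P - X) le (a - {X})" "b \<in> anc P le a"
  shows "refines b (insert X c) \<longleftrightarrow> X \<in> b \<and> refines (b - {X}) c"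
proof
  assume r: "refines b (insert X c)"
  have pa: "is_partition P a" using assms(1) by (rule is_partition_Orp)
  have pb: "is_partition P b" using assms(4) by (rule is_partition_anc)
  obtain x where x: "x \<in> X" using partition_block_nonempty[OF pa assms(2)] by blast
  then obtain B where B: "B \<in> b" "x \<in> B"
    using partition_covers[OF pb] partition_block_subset[OF pa assms(2)] by blast
  obtain D where D: "D \<in> insert X c" "B \<subseteq> D" using r B(1) unfolding refines_def by blast
  have "D \<notin> c"
    using partition_block_subset[OF is_partition_anc[OF assms(3)]] D(2) B(2) x by blast
  then have "B = X" using D anc_block_superset[OF assms(4,2) B(1) x B(2)] by blast
  then show "X \<in> b \<and> refines (b - {X}) c"
    using B(1) r refines_insert_Union_iff[OF pb, of "{X}"] by auto
qed (use refines_insert_Union_iff[OF is_partition_anc[OF assms(4)], of "{X}"] in auto)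

lemma anc_alt_sum_below_insert_block:
  assumes "finite P" "a \<in> Orp P le" "X \<in> a" "up_closed P le X"
    and "c \<in> anc (P - X) le (a - {X})"
  shows "anc_alt_sum_below P le a (insert X c) t = - anc_alt_sum_below (P - X) le (a - {X}) c (Suc t)"
proof -
  have A: "{X} \<subseteq> a" "{X} \<noteq> {}" "X = \<Union>{X}" using assms(3) by auto
  note remove_X = anc_insert_block[OF assms(1,2) A assms(4) no_chain_meets_two_singleton]
  have "anc_alt_sum_below P le a (insert X c) t
      = (\<Sum>b\<in>{b \<in> anc P le a. X \<in> b \<and> refines (b - {X}) c}. (-1) ^ card b / real (card b + t))"
    unfolding anc_alt_sum_below_def using anc_refines_insert_block_iff[OF assms(2,3,5)]
    by (metis (no_types, lifting))
  also have "\<dots> = (\<Sum>b\<in>{b \<in> anc (P - X) le (a - {X}). refines b c}.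
                      (-1) ^ card (insert X b) / real (card (insert X b) + t))"
    by (rule sum_anc_Diff_block[OF assms(1,2) A assms(4) no_chain_meets_two_singleton])
  also have "\<dots> = (\<Sum>b\<in>{b \<in> anc (P - X) le (a - {X}). refines b c}.
                      - ((-1) ^ card b / real (card b + Suc t)))"
  proof (rule sum.cong[OF refl])
    fix b assume "b \<in> {b \<in> anc (P - X) le (a - {X}). refines b c}"
    then have b: "b \<in> anc (P - X) le (a - {X})" by blast
    have "finite b" using finite_partition[OF _ is_partition_anc[OF b]] assms(1) by simp
    then have "card (insert X b) = Suc (card b)" using remove_X(2)[OF b] by simp
    then show "(-1) ^ card (insert X b) / real (card (insert X b) + t)
             = - ((-1) ^ card b / real (card b + Suc t))" by simp
  qed
  finally show ?thesis unfolding anc_alt_sum_below_def by (simp add: sum_negf)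
qed

section \<open>Posets made of two incomparable chains\<close>

lemma is_chain_has_greatest:
  assumes "finite C" "C \<noteq> {}" "poset_on P le" "is_chain P le C"
  obtains m where "m \<in> C" "\<forall>z\<in>C. le z m"
proof -
  have "\<exists>m\<in>C. \<forall>z\<in>C. le z m"
    using assms
  proof (induction C rule: finite_ne_induct)
    case (singleton x)
    then have "le x x" unfolding is_chain_def poset_on_def by simp
    then show ?case by simp
  next
    case (insert x F)
    have FP: "insert x F \<subseteq> P" using insert.prems(2) unfolding is_chain_def by blast
    have le_refl: "le x x" using insert.prems(1) FP unfolding poset_on_def by blast
    have le_trans: "le u w" if "u \<in> P" "v \<in> P" "w \<in> P" "le u v" "le v w" for u v w
      using insert.prems(1) that unfolding poset_on_def by blast
    have "is_chain P le F" using insert.prems(2) unfolding is_chain_def by blast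
    then obtain m where m: "m \<in> F" "\<forall>z\<in>F. le z m" using insert.IH insert.prems(1) by blast
    have "le m x \<or> le x m" using insert.prems(2) m(1) unfolding is_chain_def by blast
    then show ?case
    proof
      assume "le m x"
      then have "\<forall>z\<in>insert x F. le z x" using m le_refl le_trans FP by blast
      then show ?case by blast
    next
      assume "le x m"
      then show ?case using m by blast
    qed
  qed
  then show ?thesis using that by blast
qed

locale two_chain_poset =
  fixes P :: "'a set" and le :: "'a \<Rightarrow> 'a \<Rightarrow> bool" and C1 C2 :: "'a set"
  assumes finite_P: "finite P" and poset: "poset_on P le"
    and P_eq: "P = C1 \<union> C2" and disjoint: "C1 \<inter> C2 = {}"
    and chain1: "is_chain P le C1" and chain2: "is_chain P le C2"
    and incomparable: "\<forall>x\<in>C1. \<forall>y\<in>C2. \<not> le x y \<and> \<not> le y x"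
begin

lemma swap: "two_chain_poset P le C2 C1"
  using finite_P poset P_eq disjoint chain1 chain2 incomparable by unfold_locales auto

lemma chain_subset: "is_chain P le C \<Longrightarrow> C \<subseteq> C1 \<or> C \<subseteq> C2"
  using P_eq incomparable unfolding is_chain_def by blast

lemma C1_has_greatest:
  assumes "C1 \<noteq> {}"
  obtains m where "m \<in> C1" "\<forall>z\<in>C1. le z m"
  using is_chain_has_greatest[OF _ assms poset chain1] finite_P P_eq by (metis finite_Un)

lemma up_closed_Un_parts:
  assumes "up_closed P le (Z1 \<union> Z2)" "Z1 \<subseteq> C1" "Z2 \<subseteq> C2"
  shows "up_closed P le Z1" "up_closed P le Z2"
  using assms incomparable disjoint unfolding up_closed_def by blast+

lemma block_through_greatest_up_closed:
  assumes "a \<in> Orp P le" "Z \<in> a" "Z \<subseteq> C1" "m \<in> Z" "\<forall>z\<in>C1. le z m"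
  shows "up_closed P le Z"
  unfolding up_closed_def
proof (intro ballI impI)
  fix x y assume xy: "x \<in> Z" "y \<in> P" "le x y"
  then have "y \<in> C1" using assms(3) incomparable P_eq by blast
  then show "y \<in> Z" using Orp_block_convex[OF assms(1,2) xy(1) assms(4) xy(2,3)] assms(5) by blast
qed

lemma anc_block_cases:
  assumes a: "a \<in> Orp P le" and b: "b \<in> anc P le a" and B: "B \<in> b"
  shows "B \<in> a \<or> (\<exists>Z1\<in>a. \<exists>Z2\<in>a. Z1 \<subseteq> C1 \<and> Z2 \<subseteq> C2 \<and> B = Z1 \<union> Z2)"
proof -
  have pa: "is_partition P a" using a by (rule is_partition_Orp)
  have BP: "B \<subseteq> P" "B \<noteq> {}"
    using partition_block_subset[OF is_partition_anc[OF b] B]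
      partition_block_nonempty[OF is_partition_anc[OF b] B] by auto
  note trace = anc_block_chain_trace[OF a b B]
  consider "B \<inter> C2 = {}" | "B \<inter> C1 = {}" | "B \<inter> C1 \<noteq> {}" "B \<inter> C2 \<noteq> {}" by blast
  then show ?thesis
  proof cases
    case 1
    then obtain Z where "Z \<in> a" "B \<inter> C1 = Z \<inter> C1" "Z \<subseteq> B"
      using trace[OF chain1] BP P_eq by blast
    then have "B = Z" using 1 BP(1) P_eq by blast
    then show ?thesis using \<open>Z \<in> a\<close> by blast
  next
    case 2
    then obtain Z where "Z \<in> a" "B \<inter> C2 = Z \<inter> C2" "Z \<subseteq> B"
      using trace[OF chain2] BP P_eq by blast
    then have "B = Z" using 2 BP(1) P_eq by blast
    then show ?thesis using \<open>Z \<in> a\<close> by blast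
  next
    case 3
    obtain Z1 where Z1: "Z1 \<in> a" "B \<inter> C1 = Z1 \<inter> C1" "Z1 \<subseteq> B" using trace[OF chain1 3(1)] by blast
    obtain Z2 where Z2: "Z2 \<in> a" "B \<inter> C2 = Z2 \<inter> C2" "Z2 \<subseteq> B" using trace[OF chain2 3(2)] by blast
    have B_eq: "B = (Z1 \<inter> C1) \<union> (Z2 \<inter> C2)" using Z1(2) Z2(2) BP(1) P_eq by blast
    show ?thesis
    proof (cases "Z1 = Z2")
      case True
      then have "B = Z1" using B_eq Z1(3) by blast
      then show ?thesis using Z1(1) by blast
    next
      case False
      then have "Z1 \<inter> Z2 = {}" using partition_block_unique[OF pa Z1(1) Z2(1)] by blast
      moreover have "Z1 \<subseteq> P" "Z2 \<subseteq> P" using partition_block_subset[OF pa] Z1(1) Z2(1) by auto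
      ultimately have "Z1 \<subseteq> C1" "Z2 \<subseteq> C2" using Z1(2,3) Z2(2,3) P_eq by blast+
      moreover have "B = Z1 \<union> Z2" using B_eq calculation by blast
      ultimately show ?thesis using Z1(1) Z2(1) by blast
    qed
  qed
qed

lemma anc_contains_unique_up_closed_block:
  assumes a: "a \<in> Orp P le" and "P \<noteq> {}" and U: "{T \<in> a. up_closed P le T} = {X}"
    and b: "b \<in> anc P le a"
  shows "X \<in> b"
proof -
  obtain T where T: "T \<in> b" "up_closed P le T"
    using Orp_has_up_closed_block[OF finite_P \<open>P \<noteq> {}\<close> anc_Orp[OF b]] by blast
  from anc_block_cases[OF a b T(1)] show ?thesis
  proof
    assume "T \<in> a"
    then have "T \<in> {T \<in> a. up_closed P le T}" using T(2) by blast
    then show ?thesis using T(1) unfolding U by simp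
  next
    assume "\<exists>Z1\<in>a. \<exists>Z2\<in>a. Z1 \<subseteq> C1 \<and> Z2 \<subseteq> C2 \<and> T = Z1 \<union> Z2"
    then obtain Z1 Z2 where Z: "Z1 \<in> a" "Z2 \<in> a" "Z1 \<subseteq> C1" "Z2 \<subseteq> C2" "T = Z1 \<union> Z2" by blast
    then have "Z1 \<in> {T \<in> a. up_closed P le T}" "Z2 \<in> {T \<in> a. up_closed P le T}"
      using up_closed_Un_parts[of Z1 Z2] T(2) by auto
    then have "Z1 = X" "Z2 = X" unfolding U by auto
    then show ?thesis
      using Z disjoint partition_block_nonempty[OF is_partition_Orp[OF a] Z(1)] by blast
  qed
qed

end

lemma two_chain_poset_Diff:
  assumes "two_chain_poset P le C1 C2"
  shows "two_chain_poset (P - T) le (C1 - T) (C2 - T)"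
proof -
  interpret two_chain_poset P le C1 C2 by fact
  show ?thesis
  proof
    show "finite (P - T)" using finite_P by simp
    show "poset_on (P - T) le" using poset unfolding poset_on_def by blast
    show "P - T = (C1 - T) \<union> (C2 - T)" "(C1 - T) \<inter> (C2 - T) = {}" using P_eq disjoint by blast+
    show "is_chain (P - T) le (C1 - T)" "is_chain (P - T) le (C2 - T)"
      using is_chain_Diff[OF chain1] is_chain_Diff[OF chain2] .
    show "\<forall>x\<in>C1 - T. \<forall>y\<in>C2 - T. \<not> le x y \<and> \<not> le y x" using incomparable by blast
  qed
qed

locale two_chain_top_blocks = two_chain_poset +
  fixes a :: "'a set set" and m1 m2 :: 'a and X Y :: "'a set"
  assumes a_Orp: "a \<in> Orp P le"
    and m1: "m1 \<in> C1" "\<forall>z\<in>C1. le z m1" and m2: "m2 \<in> C2" "\<forall>z\<in>C2. le z m2"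
    and X: "X \<in> a" "m1 \<in> X" "X \<subseteq> C1" and Y: "Y \<in> a" "m2 \<in> Y" "Y \<subseteq> C2"
begin

lemma is_partition_a: "is_partition P a"
  using a_Orp by (rule is_partition_Orp)

lemma X_Y_disjoint: "X \<inter> Y = {}"
  using X(3) Y(3) disjoint by blast

lemma X_neq_Y: "X \<noteq> Y"
  using X_Y_disjoint X(2) by blast

lemma up_closed_X: "up_closed P le X"
  using block_through_greatest_up_closed[OF a_Orp X(1,3,2) m1(2)] .

lemma up_closed_Y: "up_closed P le Y"
  using two_chain_poset.block_through_greatest_up_closed[OF swap a_Orp Y(1,3,2) m2(2)] .

lemma up_closed_blocks: "{T \<in> a. up_closed P le T} = {X, Y}"
proof (intro equalityI subsetI)
  fix T assume "T \<in> {T \<in> a. up_closed P le T}"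
  then have T: "T \<in> a" "up_closed P le T" by blast+
  obtain z where z: "z \<in> T" using partition_block_nonempty[OF is_partition_a T(1)] by blast
  then have "z \<in> C1 \<or> z \<in> C2" using partition_block_subset[OF is_partition_a T(1)] P_eq by blast
  then have "m1 \<in> T \<or> m2 \<in> T" using T(2) z m1 m2 P_eq unfolding up_closed_def by blast
  then show "T \<in> {X, Y}" using partition_block_unique[OF is_partition_a] T(1) X Y by blast
qed (use X(1) Y(1) up_closed_X up_closed_Y in blast)

lemma no_chain_meets_X_Y: "no_chain_meets_two P le {X, Y}"
  unfolding no_chain_meets_two_def using chain_subset X(3) Y(3) disjoint by blast

lemma anc_top_block_cases:
  assumes b: "b \<in> anc P le a"
  shows "X \<in> b \<or> Y \<in> b \<or> X \<union> Y \<in> b"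
proof -
  have "P \<noteq> {}" using m1(1) P_eq by blast
  then obtain T where T: "T \<in> b" "up_closed P le T"
    using Orp_has_up_closed_block[OF finite_P _ anc_Orp[OF b]] by blast
  from anc_block_cases[OF a_Orp b T(1)] show ?thesis
  proof
    assume "T \<in> a"
    then have "T \<in> {X, Y}" using T(2) up_closed_blocks by blast
    then show ?thesis using T(1) by blast
  next
    assume "\<exists>Z1\<in>a. \<exists>Z2\<in>a. Z1 \<subseteq> C1 \<and> Z2 \<subseteq> C2 \<and> T = Z1 \<union> Z2"
    then obtain Z1 Z2 where Z: "Z1 \<in> a" "Z2 \<in> a" "Z1 \<subseteq> C1" "Z2 \<subseteq> C2" "T = Z1 \<union> Z2" by blast
    then have "Z1 \<in> {X, Y}" "Z2 \<in> {X, Y}"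
      using up_closed_Un_parts[of Z1 Z2] T(2) up_closed_blocks by auto
    moreover have "Z1 \<noteq> Y" "Z2 \<noteq> X"
      using Z(1-4) X(2,3) Y(2,3) disjoint partition_block_nonempty[OF is_partition_a] by blast+
    ultimately show ?thesis using Z(5) T(1) by auto
  qed
qed

lemma anc_Un_block_excludes:
  assumes "b \<in> anc P le a" "X \<union> Y \<in> b"
  shows "X \<notin> b" "Y \<notin> b"
  using partition_block_unique[OF is_partition_anc[OF assms(1)] assms(2)] X(2) Y(2) X_Y_disjoint
  by blast+

lemma sum_anc_Diff_X:
  "(\<Sum>b\<in>{b \<in> anc P le a. X \<in> b \<and> Q (b - {X})}. \<phi> b)
    = (\<Sum>b\<in>{b \<in> anc (P - X) le (a - {X}). Q b}. \<phi> (insert X b))"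
  using sum_anc_Diff_block[where A="{X}" and T=X,
      OF finite_P a_Orp _ _ _ up_closed_X no_chain_meets_two_singleton] X(1)
  by simp

lemma sum_anc_Diff_Y:
  "(\<Sum>b\<in>{b \<in> anc P le a. Y \<in> b \<and> Q (b - {Y})}. \<phi> b)
    = (\<Sum>b\<in>{b \<in> anc (P - Y) le (a - {Y}). Q b}. \<phi> (insert Y b))"
  using sum_anc_Diff_block[where A="{Y}" and T=Y,
      OF finite_P a_Orp _ _ _ up_closed_Y no_chain_meets_two_singleton] Y(1)
  by simp

lemma sum_anc_Diff_Un:
  "(\<Sum>b\<in>{b \<in> anc P le a. X \<union> Y \<in> b \<and> Q (b - {X \<union> Y})}. \<phi> b)
    = (\<Sum>b\<in>{b \<in> anc (P - (X \<union> Y)) le (a - {X, Y}). Q b}. \<phi> (insert (X \<union> Y) b))"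
proof -
  have "up_closed P le (X \<union> Y)" using up_closed_X up_closed_Y unfolding up_closed_def by blast
  then show ?thesis
    using sum_anc_Diff_block[where A="{X, Y}" and T="X \<union> Y",
        OF finite_P a_Orp _ _ _ _ no_chain_meets_X_Y] X(1) Y(1) by simp
qed

lemma removal_of_Y:
  "finite (P - Y)" "a - {Y} \<in> Orp (P - Y) le" "X \<in> a - {Y}" "up_closed (P - Y) le X"
  "P - Y - X = P - (X \<union> Y)" "a - {Y} - {X} = a - {X, Y}"
  using finite_P Orp_Diff_block[OF a_Orp Y(1)] X(1) X_neq_Y up_closed_X
  unfolding up_closed_def by auto

lemma sum_anc_Diff_Y_Diff_X:
  "(\<Sum>b\<in>{b \<in> anc (P - Y) le (a - {Y}). X \<in> b \<and> Q (b - {X})}. \<phi> b)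
    = (\<Sum>b\<in>{b \<in> anc (P - (X \<union> Y)) le (a - {X, Y}). Q b}. \<phi> (insert X b))"
  using sum_anc_Diff_block[where A="{X}" and T=X,
      OF removal_of_Y(1,2) _ _ _ removal_of_Y(4) no_chain_meets_two_singleton] removal_of_Y(3,5,6)
  by simp

text \<open>Every ancestor has top block X, or top block Y without X, or the merged block
  X \<union> Y; the ancestors of the middle kind are counted by inclusion-exclusion.\<close>

lemma sum_anc_split:
  fixes \<phi> :: "'a set set \<Rightarrow> 'b::ab_group_add"
  shows "(\<Sum>b\<in>anc P le a. \<phi> b)
    = (\<Sum>b\<in>anc (P - X) le (a - {X}). \<phi> (insert X b))
      + (\<Sum>b\<in>anc (P - Y) le (a - {Y}). \<phi> (insert Y b))
      - (\<Sum>b\<in>anc (P - (X \<union> Y)) le (a - {X, Y}). \<phi> (insert Y (insert X b)))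
      + (\<Sum>b\<in>anc (P - (X \<union> Y)) le (a - {X, Y}). \<phi> (insert (X \<union> Y) b))"
proof -
  let ?SX = "{b \<in> anc P le a. X \<in> b}" and ?SY = "{b \<in> anc P le a. Y \<in> b \<and> X \<notin> b}"
    and ?SU = "{b \<in> anc P le a. X \<union> Y \<in> b}"
  have fin: "finite (anc P le a)" "finite (anc (P - Y) le (a - {Y}))"
    by (simp_all add: finite_anc finite_P)
  have "(?SX \<union> ?SY) \<union> ?SU = anc P le a" using anc_top_block_cases by blast
  then have "(\<Sum>b\<in>anc P le a. \<phi> b) = sum \<phi> ((?SX \<union> ?SY) \<union> ?SU)" by (simp only:)
  moreover have "?SX \<inter> ?SY = {}" "(?SX \<union> ?SY) \<inter> ?SU = {}" using anc_Un_block_excludes by blast+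
  ultimately have "(\<Sum>b\<in>anc P le a. \<phi> b) = sum \<phi> ?SX + sum \<phi> ?SY + sum \<phi> ?SU"
    using fin(1) by (simp add: sum.union_disjoint)
  moreover have "anc (P - Y) le (a - {Y})
      = {b \<in> anc (P - Y) le (a - {Y}). X \<notin> b} \<union> {b \<in> anc (P - Y) le (a - {Y}). X \<in> b}" by blast
  then have "(\<Sum>b\<in>anc (P - Y) le (a - {Y}). \<phi> (insert Y b))
      = (\<Sum>b\<in>{b \<in> anc (P - Y) le (a - {Y}). X \<notin> b}. \<phi> (insert Y b))
        + (\<Sum>b\<in>{b \<in> anc (P - Y) le (a - {Y}). X \<in> b}. \<phi> (insert Y b))"
    using fin(2) by (metis (no_types, lifting) sum.union_disjoint disjoint_iff finite_Un mem_Collect_eq)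
  moreover have "?SY = {b \<in> anc P le a. Y \<in> b \<and> X \<notin> b - {Y}}" using X_neq_Y by blast
  ultimately show ?thesis
    using sum_anc_Diff_X[where Q="\<lambda>_. True" and \<phi>=\<phi>] sum_anc_Diff_Y[where Q="\<lambda>b. X \<notin> b" and \<phi>=\<phi>]
      sum_anc_Diff_Un[where Q="\<lambda>_. True" and \<phi>=\<phi>]
      sum_anc_Diff_Y_Diff_X[where Q="\<lambda>_. True" and \<phi>="\<lambda>b. \<phi> (insert Y b)"]
    by (simp add: algebra_simps)
qed

lemma card_anc_two_top_blocks:
  "card (anc P le a) = card (anc (P - X) le (a - {X})) + card (anc (P - Y) le (a - {Y}))"
  using sum_anc_split[of "\<lambda>_. 1 :: int"] by simp

end

lemma up_closed_blocks_apart_on_chain: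
  assumes "is_partition P a" "X \<in> a" "Y \<in> a" "X \<noteq> Y" "up_closed P le X" "up_closed P le Y"
    and "is_chain P le C"
  shows "X \<inter> C = {} \<or> Y \<inter> C = {}"
proof (rule ccontr)
  assume "\<not> (X \<inter> C = {} \<or> Y \<inter> C = {})"
  then obtain x y where xy: "x \<in> X" "y \<in> Y" "x \<in> C" "y \<in> C" by blast
  then have "le x y \<or> le y x" "x \<in> P" "y \<in> P" using assms(7) unfolding is_chain_def by blast+
  then have "y \<in> X \<or> x \<in> Y" using assms(5,6) xy(1,2) unfolding up_closed_def by blast
  then show False using partition_block_unique[OF assms(1,2,3)] xy(1,2) assms(4) by blast
qed

context two_chain_poset
begin

lemma two_up_closed_blocks:
  assumes a: "a \<in> Orp P le" and XY: "X \<in> a" "Y \<in> a" "X \<noteq> Y"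
    and up: "up_closed P le X" "up_closed P le Y" and "X \<inter> C1 \<noteq> {}"
  shows "{T \<in> a. up_closed P le T} = {X, Y}"
    "card (anc P le a) = card (anc (P - X) le (a - {X})) + card (anc (P - Y) le (a - {Y}))"
proof -
  have pa: "is_partition P a" using a by (rule is_partition_Orp)
  note apart = up_closed_blocks_apart_on_chain[OF pa]
  have "Y \<inter> C1 = {}" using apart[OF XY up chain1] \<open>X \<inter> C1 \<noteq> {}\<close> by blast
  then have Y2: "Y \<subseteq> C2" using partition_block_subset[OF pa XY(2)] P_eq by blast
  then have "Y \<inter> C2 \<noteq> {}" using partition_block_nonempty[OF pa XY(2)] by blast
  then have "X \<inter> C2 = {}" using apart[OF XY up chain2] by blast
  then have X1: "X \<subseteq> C1" using partition_block_subset[OF pa XY(1)] P_eq by blast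
  obtain m1 where m1: "m1 \<in> C1" "\<forall>z\<in>C1. le z m1" using C1_has_greatest \<open>X \<inter> C1 \<noteq> {}\<close> by blast
  obtain m2 where m2: "m2 \<in> C2" "\<forall>z\<in>C2. le z m2"
    using two_chain_poset.C1_has_greatest[OF swap] \<open>Y \<inter> C2 \<noteq> {}\<close> by blast
  have "m1 \<in> X" "m2 \<in> Y"
    using up m1 m2 X1 Y2 \<open>X \<inter> C1 \<noteq> {}\<close> \<open>Y \<inter> C2 \<noteq> {}\<close> P_eq unfolding up_closed_def by blast+
  then interpret two_chain_top_blocks P le C1 C2 a m1 m2 X Y
    using a m1 m2 XY X1 Y2 by unfold_locales auto
  show "{T \<in> a. up_closed P le T} = {X, Y}" by (rule up_closed_blocks)
  show "card (anc P le a) = card (anc (P - X) le (a - {X})) + card (anc (P - Y) le (a - {Y}))"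
    by (rule card_anc_two_top_blocks)
qed

lemma card_anc_recursion:
  assumes a: "a \<in> Orp P le" and "P \<noteq> {}"
  shows "card (anc P le a) = (\<Sum>T\<in>{T \<in> a. up_closed P le T}. card (anc (P - T) le (a - {T})))"
proof -
  have pa: "is_partition P a" using a by (rule is_partition_Orp)
  obtain X where X: "X \<in> a" "up_closed P le X" using Orp_has_up_closed_block[OF finite_P \<open>P \<noteq> {}\<close> a] .
  show ?thesis
  proof (cases "{T \<in> a. up_closed P le T} = {X}")
    case True
    have "bij_betw (\<lambda>b. b - {X}) {b \<in> anc P le a. X \<in> b} (anc (P - X) le (a - {X}))"
      using bij_betw_anc_Diff_block[where A="{X}" and T=X and Q="\<lambda>_. True",
          OF finite_P a _ _ _ X(2) no_chain_meets_two_singleton] X(1) by simp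
    moreover have "{b \<in> anc P le a. X \<in> b} = anc P le a"
      using anc_contains_unique_up_closed_block[OF a \<open>P \<noteq> {}\<close> True] by blast
    ultimately show ?thesis using True by (simp add: bij_betw_same_card)
  next
    case False
    then obtain Y where Y: "Y \<in> a" "up_closed P le Y" "X \<noteq> Y" using X by blast
    have "X \<inter> C1 \<noteq> {} \<or> X \<inter> C2 \<noteq> {}"
      using partition_block_nonempty[OF pa X(1)] partition_block_subset[OF pa X(1)] P_eq by blast
    then have "{T \<in> a. up_closed P le T} = {X, Y} \<and>
        card (anc P le a) = card (anc (P - X) le (a - {X})) + card (anc (P - Y) le (a - {Y}))"
    proof
      assume "X \<inter> C1 \<noteq> {}"
      then show ?thesis using two_up_closed_blocks[OF a X(1) Y(1) Y(3) X(2) Y(2)] by blast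
    next
      assume "X \<inter> C2 \<noteq> {}"
      then show ?thesis
        using two_chain_poset.two_up_closed_blocks[OF swap a X(1) Y(1) Y(3) X(2) Y(2)] by blast
    qed
    then show ?thesis using Y(3) by simp
  qed
qed

end

theorem opfact_eq_card_anc:
  assumes "two_chain_poset P le C1 C2" "a \<in> Orp P le"
  shows "opfact P le a = card (anc P le a)"
  using assms
proof (induction "card P" arbitrary: P C1 C2 a rule: less_induct)
  case less
  interpret two_chain_poset P le C1 C2 by (rule less.prems(1))
  have pa: "is_partition P a" using less.prems(2) by (rule is_partition_Orp)
  show ?case
  proof (cases "P = {}")
    case True
    then have "a = {}" using partition_block_subset[OF pa] partition_block_nonempty[OF pa] by blast
    then have "opfact P le a = 1" using True by (simp add: opfact_def order_pres_def kern_def)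
    moreover have "anc P le a = {a}"
      using anc_chain[OF less.prems(2)] True by (simp add: is_chain_def)
    ultimately show ?thesis by simp
  next
    case False
    have "opfact (P - T) le (a - {T}) = card (anc (P - T) le (a - {T}))"
      if T: "T \<in> a" "up_closed P le T" for T
    proof (rule less.hyps)
      have "P - T \<subset> P" using partition_block_subset[OF pa T(1)] partition_block_nonempty[OF pa T(1)] by blast
      then show "card (P - T) < card P" by (rule psubset_card_mono[OF finite_P])
      show "two_chain_poset (P - T) le (C1 - T) (C2 - T)"
        using two_chain_poset_Diff[OF less.prems(1)] .
      show "a - {T} \<in> Orp (P - T) le" using Orp_Diff_block[OF less.prems(2) T(1)] .
    qed
    then show ?thesis
      unfolding opfact_recursion[OF finite_P False less.prems(2)]
        card_anc_recursion[OF less.prems(2) False] by simp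
  qed
qed

section \<open>The alternating sum for partitions into chain blocks\<close>

context two_chain_top_blocks
begin

lemma anc_refines_insert_Un_iff:
  assumes b: "b \<in> anc P le a" and c: "c \<in> anc (P - (X \<union> Y)) le (a - {X, Y})"
  shows "refines b (insert (X \<union> Y) c) \<longleftrightarrow>
    (X \<union> Y \<in> b \<and> refines (b - {X \<union> Y}) c) \<or> (X \<in> b \<and> Y \<in> b \<and> refines (b - {X, Y}) c)"
proof -
  have pb: "is_partition P b" using b by (rule is_partition_anc)
  note merge_iff = refines_insert_Union_iff[OF pb]
  show ?thesis
  proof
    assume r: "refines b (insert (X \<union> Y) c)"
    have inside: "B \<subseteq> X \<union> Y" if "B \<in> b" "m \<in> B" "m \<in> X \<union> Y" for B m
    proof -
      have "\<exists>D\<in>insert (X \<union> Y) c. B \<subseteq> D" using r that(1) unfolding refines_def by (rule bspec)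
      then obtain D where D: "D \<in> insert (X \<union> Y) c" "B \<subseteq> D" by (rule bexE)
      have "D \<notin> c"
      proof
        assume "D \<in> c"
        then have "D \<subseteq> P - (X \<union> Y)" by (rule partition_block_subset[OF is_partition_anc[OF c]])
        then show False using D(2) that(2,3) by blast
      qed
      then show ?thesis using D by blast
    qed
    obtain BX BY where B: "BX \<in> b" "m1 \<in> BX" "BY \<in> b" "m2 \<in> BY"
      using partition_covers[OF pb] m1(1) m2(1) P_eq by (metis UnCI)
    have "X \<subseteq> BX" "Y \<subseteq> BY" "BX \<subseteq> X \<union> Y" "BY \<subseteq> X \<union> Y"
      using anc_block_superset[OF b X(1) B(1) X(2) B(2)] anc_block_superset[OF b Y(1) B(3) Y(2) B(4)]
        inside[OF B(1,2)] inside[OF B(3,4)] X(2) Y(2) by blast+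
    moreover have "BX = BY \<or> BX \<inter> BY = {}" using partition_block_unique[OF pb B(1,3)] by blast
    ultimately have "BX = X \<union> Y \<or> (BX = X \<and> BY = Y)" using X_Y_disjoint by blast
    then have "X \<union> Y \<in> b \<or> (X \<in> b \<and> Y \<in> b)" using B(1,3) by metis
    then show "(X \<union> Y \<in> b \<and> refines (b - {X \<union> Y}) c) \<or> (X \<in> b \<and> Y \<in> b \<and> refines (b - {X, Y}) c)"
      using r merge_iff[of "{X \<union> Y}"] merge_iff[of "{X, Y}"] by auto
  qed (use merge_iff[of "{X \<union> Y}"] merge_iff[of "{X, Y}"] in auto)
qed

lemma anc_alt_sum_below_insert_Un:
  assumes c: "c \<in> anc (P - (X \<union> Y)) le (a - {X, Y})"
  shows "anc_alt_sum_below P le a (insert (X \<union> Y) c) t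
    = - anc_alt_sum_below (P - (X \<union> Y)) le (a - {X, Y}) c (Suc t)
      + anc_alt_sum_below (P - (X \<union> Y)) le (a - {X, Y}) c (Suc (Suc t))"
proof -
  define f where "f b = (-1) ^ card b / real (card b + t)" for b :: "'a set set"
  let ?R = "{b \<in> anc (P - (X \<union> Y)) le (a - {X, Y}). refines b c}"
  let ?S1 = "{b \<in> anc P le a. X \<union> Y \<in> b \<and> refines (b - {X \<union> Y}) c}"
  let ?S2 = "{b \<in> anc P le a. Y \<in> b \<and> (X \<in> b - {Y} \<and> refines (b - {Y} - {X}) c)}"
  have fin: "finite (anc P le a)" by (simp add: finite_anc finite_P)
  have card_R: "card (insert (X \<union> Y) b) = Suc (card b)" "card (insert Y (insert X b)) = Suc (Suc (card b))"
    if "b \<in> ?R" for b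
  proof -
    have pb: "is_partition (P - (X \<union> Y)) b" using that is_partition_anc by blast
    then have "finite b" using finite_P finite_partition by blast
    moreover have "X \<notin> b" "Y \<notin> b" "X \<union> Y \<notin> b"
      using partition_block_subset[OF pb] X(2) Y(2) by blast+
    ultimately show "card (insert (X \<union> Y) b) = Suc (card b)" "card (insert Y (insert X b)) = Suc (Suc (card b))"
      using X_neq_Y by simp_all
  qed
  have "b - {Y} - {X} = b - {X, Y}" for b :: "'a set set" by blast
  then have "{b \<in> anc P le a. refines b (insert (X \<union> Y) c)} = ?S1 \<union> ?S2"
    using anc_refines_insert_Un_iff[OF _ c] X_neq_Y by auto
  moreover have "?S1 \<inter> ?S2 = {}" using anc_Un_block_excludes by blast
  ultimately have "anc_alt_sum_below P le a (insert (X \<union> Y) c) t = sum f ?S1 + sum f ?S2"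
    unfolding anc_alt_sum_below_def f_def using fin by (simp add: sum.union_disjoint)
  also have "sum f ?S1 = (\<Sum>b\<in>?R. f (insert (X \<union> Y) b))"
    by (rule sum_anc_Diff_Un)
  also have "\<dots> = (\<Sum>b\<in>?R. - ((-1) ^ card b / real (card b + Suc t)))"
    unfolding f_def using card_R(1) by (intro sum.cong) simp_all
  also have "\<dots> = - anc_alt_sum_below (P - (X \<union> Y)) le (a - {X, Y}) c (Suc t)"
    unfolding anc_alt_sum_below_def by (simp add: sum_negf)
  also have "sum f ?S2
      = (\<Sum>b\<in>{b \<in> anc (P - Y) le (a - {Y}). X \<in> b \<and> refines (b - {X}) c}. f (insert Y b))"
    by (rule sum_anc_Diff_Y)
  also have "\<dots> = (\<Sum>b\<in>?R. f (insert Y (insert X b)))"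
    by (rule sum_anc_Diff_Y_Diff_X)
  also have "\<dots> = anc_alt_sum_below (P - (X \<union> Y)) le (a - {X, Y}) c (Suc (Suc t))"
    unfolding anc_alt_sum_below_def f_def using card_R(2) by (intro sum.cong) simp_all
  finally show ?thesis .
qed

lemma anc_alt_sum_recursion:
  "anc_alt_sum P le a t = - (anc_alt_sum (P - X) le (a - {X}) (Suc t)
     + anc_alt_sum (P - Y) le (a - {Y}) (Suc t) + anc_alt_sum (P - (X \<union> Y)) le (a - {X, Y}) (Suc t))"
proof -
  let ?g = "\<lambda>c. anc_alt_sum_below P le a c t"
  have "c \<in> anc (P - X) le (a - {X}) \<Longrightarrow> ?g (insert X c) = - anc_alt_sum_below (P - X) le (a - {X}) c (Suc t)"
    "c \<in> anc (P - Y) le (a - {Y}) \<Longrightarrow> ?g (insert Y c) = - anc_alt_sum_below (P - Y) le (a - {Y}) c (Suc t)"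
    for c using anc_alt_sum_below_insert_block[OF finite_P a_Orp X(1) up_closed_X]
      anc_alt_sum_below_insert_block[OF finite_P a_Orp Y(1) up_closed_Y] by blast+
  moreover have "?g (insert Y (insert X c))
      = anc_alt_sum_below (P - (X \<union> Y)) le (a - {X, Y}) c (Suc (Suc t))"
    if c: "c \<in> anc (P - (X \<union> Y)) le (a - {X, Y})" for c
  proof -
    have "insert X c \<in> anc (P - Y) le (a - {Y})"
      using anc_insert_block[where A="{X}" and T=X, OF removal_of_Y(1,2) _ _ _ removal_of_Y(4)
          no_chain_meets_two_singleton] c removal_of_Y(3,5,6) by simp
    then show ?thesis
      using anc_alt_sum_below_insert_block[OF finite_P a_Orp Y(1) up_closed_Y]
        anc_alt_sum_below_insert_block[OF removal_of_Y(1-4)] c removal_of_Y(5,6) by simp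
  qed
  ultimately show ?thesis
    unfolding anc_alt_sum_def sum_anc_split[of ?g]
    by (simp add: anc_alt_sum_below_insert_Un sum.distrib sum_negf sum_subtractf algebra_simps)
qed

end

definition closed_anc_alt_sum :: "nat \<Rightarrow> nat \<Rightarrow> nat \<Rightarrow> real" where
  "closed_anc_alt_sum p q s =
     (-1) ^ (p + q) * fact (s + p) * fact (s + q) / (fact s * fact (Suc (s + p + q)))"

lemma closed_anc_alt_sum_times:
  "fact s * fact (Suc (s + p + q)) * closed_anc_alt_sum p q s = (-1) ^ (p + q) * fact (s + p) * fact (s + q)"
  unfolding closed_anc_alt_sum_def by simp

lemma closed_anc_alt_sum_recursion:
  "closed_anc_alt_sum (Suc p) (Suc q) s = - (closed_anc_alt_sum p (Suc q) (Suc s)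
     + closed_anc_alt_sum (Suc p) q (Suc s) + closed_anc_alt_sum p q (Suc s))"
proof -
  define M where "M = (fact (Suc s) * fact (s + p + q + 3) :: real)"
  define u where "u = (-1) ^ (p + q) * fact (Suc (s + p)) * (fact (Suc (s + q)) :: real)"
  note times = closed_anc_alt_sum_times
  \<comment> \<open>multiplying by M clears all denominators, leaving multiples of u\<close>
  have "M * closed_anc_alt_sum (Suc p) (Suc q) s = (real s + 1) * u"
    using arg_cong[OF times[of s "Suc p" "Suc q"], of "(*) (real s + 1)"]
    unfolding M_def u_def by (simp add: algebra_simps numeral_3_eq_3)
  moreover have "M * closed_anc_alt_sum p (Suc q) (Suc s) = - (real s + real q + 2) * u"
    using times[of "Suc s" p "Suc q"] unfolding M_def u_def by (simp add: algebra_simps numeral_3_eq_3)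
  moreover have "M * closed_anc_alt_sum (Suc p) q (Suc s) = - (real s + real p + 2) * u"
    using times[of "Suc s" "Suc p" q] unfolding M_def u_def by (simp add: algebra_simps numeral_3_eq_3)
  moreover have "M * closed_anc_alt_sum p q (Suc s) = (real (s + p + q) + 3) * u"
    using arg_cong[OF times[of "Suc s" p q], of "(*) (real (s + p + q) + 3)"]
    unfolding M_def u_def by (simp add: algebra_simps numeral_3_eq_3)
  ultimately have "M * closed_anc_alt_sum (Suc p) (Suc q) s = M * - (closed_anc_alt_sum p (Suc q) (Suc s)
     + closed_anc_alt_sum (Suc p) q (Suc s) + closed_anc_alt_sum p q (Suc s))"
    by (simp add: algebra_simps)
  moreover have "M \<noteq> 0" unfolding M_def by simp
  ultimately show ?thesis by simp
qed

lemma closed_anc_alt_sum_vanishes: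
  "closed_anc_alt_sum p (Suc q) 0 + closed_anc_alt_sum (Suc p) q 0 + closed_anc_alt_sum p q 0 = 0"
proof -
  define M where "M = (fact (p + q + 2) :: real)"
  define v where "v = (-1) ^ (p + q) * fact p * (fact q :: real)"
  note times = closed_anc_alt_sum_times
  have "M * closed_anc_alt_sum p (Suc q) 0 = - (real q + 1) * v"
    using times[of 0 p "Suc q"] unfolding M_def v_def by (simp add: algebra_simps)
  moreover have "M * closed_anc_alt_sum (Suc p) q 0 = - (real p + 1) * v"
    using times[of 0 "Suc p" q] unfolding M_def v_def by (simp add: algebra_simps)
  moreover have "M * closed_anc_alt_sum p q 0 = (real (p + q) + 2) * v"
    using arg_cong[OF times[of 0 p q], of "(*) (real (p + q) + 2)"]
    unfolding M_def v_def by (simp add: algebra_simps)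
  ultimately have "M * (closed_anc_alt_sum p (Suc q) 0 + closed_anc_alt_sum (Suc p) q 0
      + closed_anc_alt_sum p q 0) = 0"
    by (simp add: algebra_simps)
  moreover have "M \<noteq> 0" unfolding M_def by simp
  ultimately show ?thesis by simp
qed

lemma closed_anc_alt_sum_0_right: "closed_anc_alt_sum p 0 s = (-1) ^ p / real (Suc (s + p))"
proof -
  have "fact (Suc (s + p)) = real (Suc (s + p)) * fact (s + p)" by (rule fact_Suc)
  then show ?thesis unfolding closed_anc_alt_sum_def by (simp del: fact_Suc)
qed

lemma closed_anc_alt_sum_commute: "closed_anc_alt_sum p q s = closed_anc_alt_sum q p s"
  unfolding closed_anc_alt_sum_def by (simp add: ac_simps)

lemma (in two_chain_top_blocks) anc_alt_sum_closed_step: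
  assumes p: "card {B \<in> a. B \<subseteq> C1} = Suc p" and q: "card {B \<in> a. B \<subseteq> C2} = Suc q"
    and smaller: "\<And>A. A \<in> {{X}, {Y}, {X, Y}} \<Longrightarrow> anc_alt_sum (P - \<Union>A) le (a - A) (Suc t)
      = closed_anc_alt_sum (card {B \<in> a - A. B \<subseteq> C1}) (card {B \<in> a - A. B \<subseteq> C2}) t"
  shows "anc_alt_sum P le a t = - (closed_anc_alt_sum p (Suc q) t + closed_anc_alt_sum (Suc p) q t
    + closed_anc_alt_sum p q t)"
proof -
  have fin: "finite {B \<in> a. B \<subseteq> C}" for C using finite_partition[OF finite_P is_partition_a] by simp
  have "\<not> X \<subseteq> C2" "\<not> Y \<subseteq> C1" using X(2) Y(2) m1(1) m2(1) disjoint by blast+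
  then have "{B \<in> a - {X}. B \<subseteq> C1} = {B \<in> a. B \<subseteq> C1} - {X}" "{B \<in> a - {X}. B \<subseteq> C2} = {B \<in> a. B \<subseteq> C2}"
    "{B \<in> a - {Y}. B \<subseteq> C1} = {B \<in> a. B \<subseteq> C1}" "{B \<in> a - {Y}. B \<subseteq> C2} = {B \<in> a. B \<subseteq> C2} - {Y}"
    "{B \<in> a - {X, Y}. B \<subseteq> C1} = {B \<in> a. B \<subseteq> C1} - {X}"
    "{B \<in> a - {X, Y}. B \<subseteq> C2} = {B \<in> a. B \<subseteq> C2} - {Y}" by blast+
  then have "card {B \<in> a - {X}. B \<subseteq> C1} = p" "card {B \<in> a - {X}. B \<subseteq> C2} = Suc q"
    "card {B \<in> a - {Y}. B \<subseteq> C1} = Suc p" "card {B \<in> a - {Y}. B \<subseteq> C2} = q"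
    "card {B \<in> a - {X, Y}. B \<subseteq> C1} = p" "card {B \<in> a - {X, Y}. B \<subseteq> C2} = q"
    using p q fin X Y by simp_all
  then show ?thesis
    using anc_alt_sum_recursion[of t] smaller[of "{X}"] smaller[of "{Y}"] smaller[of "{X, Y}"] by simp
qed

context two_chain_poset
begin

lemma chain_blocks_Diff_Union:
  assumes "a \<in> Orp P le" "\<forall>B\<in>a. B \<subseteq> C1 \<or> B \<subseteq> C2" "A \<subseteq> a"
  shows "two_chain_poset (P - \<Union>A) le (C1 - \<Union>A) (C2 - \<Union>A)" "a - A \<in> Orp (P - \<Union>A) le"
    "\<forall>B\<in>a - A. B \<subseteq> C1 - \<Union>A \<or> B \<subseteq> C2 - \<Union>A"
    "{B \<in> a - A. B \<subseteq> C1 - \<Union>A} = {B \<in> a - A. B \<subseteq> C1}"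
    "{B \<in> a - A. B \<subseteq> C2 - \<Union>A} = {B \<in> a - A. B \<subseteq> C2}"
  using two_chain_poset_Diff[OF two_chain_poset_axioms] Orp_Diff_Union[OF assms(1,3)]
    assms(2) partition_block_disjoint_Union[OF is_partition_Orp[OF assms(1)] assms(3)] by blast+

lemma two_chain_top_blocks_exist:
  assumes "a \<in> Orp P le" "\<forall>B\<in>a. B \<subseteq> C1 \<or> B \<subseteq> C2" "C1 \<noteq> {}" "C2 \<noteq> {}"
  obtains m1 m2 X Y where "two_chain_top_blocks P le C1 C2 a m1 m2 X Y"
proof -
  obtain m1 where m1: "m1 \<in> C1" "\<forall>z\<in>C1. le z m1" using C1_has_greatest assms(3) by blast
  obtain m2 where m2: "m2 \<in> C2" "\<forall>z\<in>C2. le z m2"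
    using two_chain_poset.C1_has_greatest[OF swap] assms(4) by blast
  obtain X Y where XY: "X \<in> a" "m1 \<in> X" "Y \<in> a" "m2 \<in> Y"
    using partition_covers[OF is_partition_Orp[OF assms(1)]] m1(1) m2(1) P_eq by (metis UnCI)
  then have "X \<subseteq> C1" "Y \<subseteq> C2" using assms(2) m1(1) m2(1) disjoint by blast+
  then have "two_chain_top_blocks P le C1 C2 a m1 m2 X Y"
    using assms(1) m1 m2 XY by unfold_locales auto
  then show ?thesis using that by blast
qed

end

lemma (in two_chain_top_blocks) card_chain_blocks_Suc:
  obtains p q where "card {B \<in> a. B \<subseteq> C1} = Suc p" "card {B \<in> a. B \<subseteq> C2} = Suc q"
proof -
  have "finite {B \<in> a. B \<subseteq> C}" for C using finite_partition[OF finite_P is_partition_a] by simp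
  then have "card {B \<in> a. B \<subseteq> C1} \<noteq> 0" "card {B \<in> a. B \<subseteq> C2} \<noteq> 0" using X(1,3) Y(1,3) by auto
  then show ?thesis using that not0_implies_Suc by metis
qed

theorem anc_alt_sum_closed_form:
  assumes "two_chain_poset P le C1 C2" "a \<in> Orp P le" "\<forall>B\<in>a. B \<subseteq> C1 \<or> B \<subseteq> C2"
  shows "anc_alt_sum P le a (Suc s) = closed_anc_alt_sum (card {B \<in> a. B \<subseteq> C1}) (card {B \<in> a. B \<subseteq> C2}) s"
  using assms
proof (induction "card P" arbitrary: P C1 C2 a s rule: less_induct)
  case less
  interpret two_chain_poset P le C1 C2 by (rule less.prems(1))
  have pa: "is_partition P a" using less.prems(2) by (rule is_partition_Orp)
  show ?case
  proof (cases "C1 = {} \<or> C2 = {}")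
    case True
    then have "is_chain P le P" using chain1 chain2 P_eq by auto
    note sum = anc_alt_sum_chain[OF less.prems(2) this, of "Suc s"]
    have "{B \<in> a. B \<subseteq> C1} = a \<and> {B \<in> a. B \<subseteq> C2} = {} \<or> {B \<in> a. B \<subseteq> C1} = {} \<and> {B \<in> a. B \<subseteq> C2} = a"
      using True P_eq partition_block_subset[OF pa] partition_block_nonempty[OF pa] by blast
    then show ?thesis
    proof (elim disjE conjE)
      assume h: "{B \<in> a. B \<subseteq> C1} = a" "{B \<in> a. B \<subseteq> C2} = {}"
      show ?thesis unfolding sum h by (simp add: closed_anc_alt_sum_0_right ac_simps)
    next
      assume h: "{B \<in> a. B \<subseteq> C1} = {}" "{B \<in> a. B \<subseteq> C2} = a"
      show ?thesis unfolding sum h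
        by (simp add: closed_anc_alt_sum_commute[of 0] closed_anc_alt_sum_0_right ac_simps)
    qed
  next
    case False
    then obtain m1 m2 X Y where "two_chain_top_blocks P le C1 C2 a m1 m2 X Y"
      using two_chain_top_blocks_exist[OF less.prems(2,3)] by blast
    then interpret two_chain_top_blocks P le C1 C2 a m1 m2 X Y .
    obtain p q where pq: "card {B \<in> a. B \<subseteq> C1} = Suc p" "card {B \<in> a. B \<subseteq> C2} = Suc q"
      by (rule card_chain_blocks_Suc)
    have "anc_alt_sum (P - \<Union>A) le (a - A) (Suc (Suc s))
      = closed_anc_alt_sum (card {B \<in> a - A. B \<subseteq> C1}) (card {B \<in> a - A. B \<subseteq> C2}) (Suc s)"
      if "A \<in> {{X}, {Y}, {X, Y}}" for A
    proof -
      have A: "A \<subseteq> a" "A \<noteq> {}" using that X(1) Y(1) by auto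
      then have "P - \<Union>A \<subset> P" using partition_block_subset[OF pa] partition_block_nonempty[OF pa] by blast
      then have "card (P - \<Union>A) < card P" by (rule psubset_card_mono[OF finite_P])
      then show ?thesis
        using less.hyps chain_blocks_Diff_Union[OF less.prems(2,3) A(1)] by simp
    qed
    then have "anc_alt_sum P le a (Suc s) = - (closed_anc_alt_sum p (Suc q) (Suc s)
        + closed_anc_alt_sum (Suc p) q (Suc s) + closed_anc_alt_sum p q (Suc s))"
      by (rule anc_alt_sum_closed_step[OF pq])
    then show ?thesis unfolding pq closed_anc_alt_sum_recursion .
  qed
qed

lemma dfrak_eq_anc_alt_sum:
  assumes "two_chain_poset P le C1 C2" "a \<in> Orp P le"
  shows "dfrak P le a = - anc_alt_sum P le a 0"
proof -
  have fin: "finite (anc P le a)" using finite_anc two_chain_poset.finite_P[OF assms(1)] by blast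
  have "(-1) ^ (card b - 1) * real (opfact P le b) / real (card b)
      = (\<Sum>c\<in>{c \<in> anc P le a. refines b c}. - ((-1) ^ card b / real (card b)))"
    if b: "b \<in> anc P le a" for b
  proof -
    have "opfact P le b = card {c \<in> anc P le a. refines b c}"
      using opfact_eq_card_anc[OF assms(1) anc_Orp[OF b]] anc_anc[OF b] by simp
    moreover have "(-1) ^ (n - 1) * m / real n = m * - ((-1) ^ n / real n)" for n and m :: real
      \<comment> \<open>for n = 0 both sides are 0, as x / 0 = 0\<close>
      by (cases n) simp_all
    ultimately show ?thesis by simp
  qed
  then have "dfrak P le a = (\<Sum>b\<in>anc P le a. \<Sum>c\<in>{c \<in> anc P le a. refines b c}. - ((-1) ^ card b / real (card b)))"
    unfolding dfrak_def by (rule sum.cong[OF refl])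
  also have "\<dots> = (\<Sum>c\<in>anc P le a. \<Sum>b\<in>{b \<in> anc P le a. refines b c}. - ((-1) ^ card b / real (card b)))"
    by (rule sum.swap_restrict[OF fin fin])
  also have "\<dots> = - anc_alt_sum P le a 0"
    unfolding anc_alt_sum_def anc_alt_sum_below_def by (simp add: sum_negf)
  finally show ?thesis .
qed

theorem dfrak_chain_blocks_eq_0:
  assumes "two_chain_poset P le C1 C2" "a \<in> Orp P le" "\<forall>B\<in>a. B \<subseteq> C1 \<or> B \<subseteq> C2"
    and "C1 \<noteq> {}" "C2 \<noteq> {}"
  shows "dfrak P le a = 0"
proof -
  interpret two_chain_poset P le C1 C2 by fact
  obtain m1 m2 X Y where "two_chain_top_blocks P le C1 C2 a m1 m2 X Y"
    using two_chain_top_blocks_exist[OF assms(2-5)] by blast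
  then interpret two_chain_top_blocks P le C1 C2 a m1 m2 X Y .
  obtain p q where pq: "card {B \<in> a. B \<subseteq> C1} = Suc p" "card {B \<in> a. B \<subseteq> C2} = Suc q"
    by (rule card_chain_blocks_Suc)
  have "anc_alt_sum (P - \<Union>A) le (a - A) (Suc 0)
      = closed_anc_alt_sum (card {B \<in> a - A. B \<subseteq> C1}) (card {B \<in> a - A. B \<subseteq> C2}) 0"
    if "A \<in> {{X}, {Y}, {X, Y}}" for A
  proof -
    have A: "A \<subseteq> a" using that X(1) Y(1) by auto
    show ?thesis
      using anc_alt_sum_closed_form[OF chain_blocks_Diff_Union(1-3)[OF assms(2,3) A]]
        chain_blocks_Diff_Union(4,5)[OF assms(2,3) A] by simp
  qed
  then have "anc_alt_sum P le a 0 = - (closed_anc_alt_sum p (Suc q) 0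
      + closed_anc_alt_sum (Suc p) q 0 + closed_anc_alt_sum p q 0)"
    by (rule anc_alt_sum_closed_step[OF pq])
  then have "anc_alt_sum P le a 0 = 0" unfolding closed_anc_alt_sum_vanishes by simp
  then show ?thesis using dfrak_eq_anc_alt_sum[OF assms(1,2)] by simp
qed

theorem proposition2p2:
  fixes P C1 C2 :: "'a set" and le :: "'a \<Rightarrow> 'a \<Rightarrow> bool"
  assumes "finite P"
    and "poset_on P le"
    and "P = C1 \<union> C2"
    and "C1 \<inter> C2 = {}"
    and "C1 \<noteq> {}" and "C2 \<noteq> {}"
    and "is_chain P le C1" and "is_chain P le C2"
    and "\<forall>x\<in>C1. \<forall>y\<in>C2. \<not> le x y \<and> \<not> le y x"
    and "a \<in> Orp P le"
  shows "opfact P le a = card (anc P le a)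
    \<and> ((\<forall>B\<in>a. B \<subseteq> C1 \<or> B \<subseteq> C2) \<longrightarrow> dfrak P le a = 0)"
proof -
  have P: "two_chain_poset P le C1 C2"
    using assms(1-4,7-9) by unfold_locales
  show ?thesis
    using opfact_eq_card_anc[OF P assms(10)] dfrak_chain_blocks_eq_0[OF P assms(10) _ assms(5,6)] by blast
qed

end
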